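(* Let $\mathcal{P}$ and $\mathcal{N}$ be disjoint finite index sets (positives and negatives) with $|\mathcal{P}|\ge1$, with real logits $(s_i)_{i\in\mathcal{P}\cup\mathcal{N}}$ and, for $i\in\mathcal{P}$, values $\mathrm{IoU}_i\in[0,1]$, and fix $\delta\ge0$. The bucketed algorithm described in the context computes all Bucketed AP Loss gradients (respectively all Bucketed RS Loss gradients) $g_i$, $i\in\mathcal{P}\cup\mathcal{N}$, in time $\mathcal{O}\big(\max\big((|\mathcal{P}|+|\mathcal{N}|)\log(|\mathcal{P}|+|\mathcal{N}|),\,|\mathcal{P}|^2\big)\big)$.
   Context: Smoothed step function: $H(x)=0$ for $x<-\delta$, $H(x)=\frac{x}{2\delta}+\frac12$ for $-\delta\le x\le\delta$, $H(x)=1$ for $x>\delta$ (for $\delta=0$: $H(x)=1$ if $x>0$, $0$ if $x<0$). $x_{ij}=s_j-s_i$. Ratios with zero denominator are taken as $0$. Buckets: sort all logits decreasingly; the positives appear as $\hat s^+_1\ge\dots\ge\hat s^+_{|\mathcal{P}|}$; $B_1$ is the set of negatives above $\hat s^+_1$, $B_k$ the negatives between $\hat s^+_{k-1}$ and $\hat s^+_k$, $B_{|\mathcal{P}|+1}$ the negatives below $\hat s^+_{|\mathcal{P}|}$ (so there are at most $|\mathcal{P}|+1$ buckets); $b_k=|B_k|$; for nonempty $B_k$ the prototype logit $s^b_k$ is the mean logit of $B_k$ and $x^b_{ik}=s^b_k-s_i$. For $i\in\mathcal{P}$: $N^b_{FP}(i)=\sum_kH(x^b_{ik})b_k$, $\ell^b_R(i)=\frac{N^b_{FP}(i)}{\sum_{j\in\mathcal{P}}H(x_{ij})+N^b_{FP}(i)}$,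 $p(k^b|i)=b_kH(x^b_{ik})/N^b_{FP}(i)$; $\mathrm{rank}^+(i)=\sum_{j\in\mathcal{P}}H(x_{ij})$; sorting error $\ell_S(i)=\frac{1}{\mathrm{rank}^+(i)}\sum_{j\in\mathcal{P}}H(x_{ij})(1-\mathrm{IoU}_j)$; target sorting error $\ell^*_S(i)=\frac{\sum_{j\in\mathcal{P}}H(x_{ij})[\mathrm{IoU}_j\ge\mathrm{IoU}_i](1-\mathrm{IoU}_j)}{\sum_{j\in\mathcal{P}}H(x_{ij})[\mathrm{IoU}_j\ge\mathrm{IoU}_i]}$; sorting pmf $p_S(j|i)=\frac{H(x_{ij})[\mathrm{IoU}_j<\mathrm{IoU}_i]}{\sum_{k\in\mathcal{P}}H(x_{ik})[\mathrm{IoU}_k<\mathrm{IoU}_i]}$. Bucketed AP gradients: $g_i=-\frac{1}{|\mathcal{P}|}\ell^b_R(i)$ for $i\in\mathcal{P}$, and $g_i=\frac{1}{|\mathcal{P}|}\sum_{j\in\mathcal{P}}\ell^b_R(j)p(k^b|j)\frac{1}{b_k}$ for a negative $i\in B_k$. Bucketed RS gradients: same for negatives, and for $i\in\mathcal{P}$, $g_i=\frac{1}{|\mathcal{P}|}\big(-\ell^b_R(i)+\ell^*_S(i)-\ell_S(i)+\sum_{j\in\mathcal{P}}(\ell_S(j)-\ell^*_S(j))p_S(i|j)\big)$. The bucketed algorithm: (1) sort all logits; (2) form the buckets and prototype logits in one pass; (3) compute all $x^b_{ik}$, $i\in\mathcal{P}$, over prototypes; (4) compute $\ell^b_R(i)$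 for all $i\in\mathcal{P}$; (5) compute the primary terms $\ell^b_R(i)p(k^b|i)$ for all positive/prototype pairs; (6)–(8) (RS only) compute $\ell_S,\ell^*_S$ and the positive–positive terms $(\ell_S(i)-\ell^*_S(i))p_S(j|i)$; (9)–(10) sum primary terms to get the gradients of positives and of each prototype; (11) divide each prototype's gradient by $b_k$ and assign it to every negative of $B_k$; (12) normalize by $|\mathcal{P}|$. *)

theory Defs
  imports Complex_Main "HOL-Library.Time_Functions"
begin

text \<open>Smoothed step function H with parameter d (= delta).  For d = 0 the value at 0 is
  taken to be 1/2 (the common value of the formula x/(2d)+1/2 at x = 0).\<close>
definition Hstep :: "real \<Rightarrow> real \<Rightarrow> real" where
  "Hstep d x = (if x < 0 - d then 0 else if d < x then 1
               else if d = 0 then 1/2 else x / (2 * d) + 1/2)"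

text \<open>Bucket index of a negative n: it lies below exactly the positives with logit \<ge> s n
  (ties between a negative and a positive put the negative below the positive).\<close>
definition bidx :: "'a set \<Rightarrow> ('a \<Rightarrow> real) \<Rightarrow> 'a \<Rightarrow> nat" where
  "bidx P s n = 1 + card {i \<in> P. s n \<le> s i}"

definition bucket :: "'a set \<Rightarrow> 'a set \<Rightarrow> ('a \<Rightarrow> real) \<Rightarrow> nat \<Rightarrow> 'a set" where
  "bucket P N s k = {n \<in> N. bidx P s n = k}"

definition bsize :: "'a set \<Rightarrow> 'a set \<Rightarrow> ('a \<Rightarrow> real) \<Rightarrow> nat \<Rightarrow> real" where
  "bsize P N s k = real (card (bucket P N s k))"

definition proto :: "'a set \<Rightarrow> 'a set \<Rightarrow> ('a \<Rightarrow> real) \<Rightarrow> nat \<Rightarrow> real" where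
  "proto P N s k = (\<Sum>n\<in>bucket P N s k. s n) / bsize P N s k"

definition NFPb :: "real \<Rightarrow> 'a set \<Rightarrow> 'a set \<Rightarrow> ('a \<Rightarrow> real) \<Rightarrow> 'a \<Rightarrow> real" where
  "NFPb d P N s i = (\<Sum>k\<in>{1..card P + 1}. Hstep d (proto P N s k - s i) * bsize P N s k)"

definition rankpos :: "real \<Rightarrow> 'a set \<Rightarrow> ('a \<Rightarrow> real) \<Rightarrow> 'a \<Rightarrow> real" where
  "rankpos d P s i = (\<Sum>j\<in>P. Hstep d (s j - s i))"

definition lRb :: "real \<Rightarrow> 'a set \<Rightarrow> 'a set \<Rightarrow> ('a \<Rightarrow> real) \<Rightarrow> 'a \<Rightarrow> real" where
  "lRb d P N s i = NFPb d P N s i / (rankpos d P s i + NFPb d P N s i)"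

definition pkb :: "real \<Rightarrow> 'a set \<Rightarrow> 'a set \<Rightarrow> ('a \<Rightarrow> real) \<Rightarrow> nat \<Rightarrow> 'a \<Rightarrow> real" where
  "pkb d P N s k i = bsize P N s k * Hstep d (proto P N s k - s i) / NFPb d P N s i"

definition iv :: "bool \<Rightarrow> real" where
  "iv b = (if b then 1 else 0)"

definition lS :: "real \<Rightarrow> 'a set \<Rightarrow> ('a \<Rightarrow> real) \<Rightarrow> ('a \<Rightarrow> real) \<Rightarrow> 'a \<Rightarrow> real" where
  "lS d P s iou i = (\<Sum>j\<in>P. Hstep d (s j - s i) * (1 - iou j)) / rankpos d P s i"

definition lSt :: "real \<Rightarrow> 'a set \<Rightarrow> ('a \<Rightarrow> real) \<Rightarrow> ('a \<Rightarrow> real) \<Rightarrow> 'a \<Rightarrow> real" where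
  "lSt d P s iou i =
     (\<Sum>j\<in>P. Hstep d (s j - s i) * iv (iou i \<le> iou j) * (1 - iou j)) /
     (\<Sum>j\<in>P. Hstep d (s j - s i) * iv (iou i \<le> iou j))"

definition pS :: "real \<Rightarrow> 'a set \<Rightarrow> ('a \<Rightarrow> real) \<Rightarrow> ('a \<Rightarrow> real) \<Rightarrow> 'a \<Rightarrow> 'a \<Rightarrow> real" where
  "pS d P s iou j i =
     Hstep d (s j - s i) * iv (iou j < iou i) / (\<Sum>k\<in>P. Hstep d (s k - s i) * iv (iou k < iou i))"

definition gneg :: "real \<Rightarrow> 'a set \<Rightarrow> 'a set \<Rightarrow> ('a \<Rightarrow> real) \<Rightarrow> 'a \<Rightarrow> real" where
  "gneg d P N s n = (let k = bidx P s n in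
      (1 / real (card P)) * (\<Sum>j\<in>P. lRb d P N s j * pkb d P N s k j * (1 / bsize P N s k)))"

definition gAP :: "real \<Rightarrow> 'a set \<Rightarrow> 'a set \<Rightarrow> ('a \<Rightarrow> real) \<Rightarrow> 'a \<Rightarrow> real" where
  "gAP d P N s x = (if x \<in> P then - (1 / real (card P)) * lRb d P N s x else gneg d P N s x)"

definition gRS :: "real \<Rightarrow> 'a set \<Rightarrow> 'a set \<Rightarrow> ('a \<Rightarrow> real) \<Rightarrow> ('a \<Rightarrow> real) \<Rightarrow> 'a \<Rightarrow> real" where
  "gRS d P N s iou x = (if x \<in> P then
      (1 / real (card P)) * (- lRb d P N s x + lSt d P s iou x - lS d P s iou x
         + (\<Sum>j\<in>P. (lS d P s iou j - lSt d P s iou j) * pS d P s iou x j))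
    else gneg d P N s x)"

section \<open>The bucketed algorithm, as a functional program\<close>

text \<open>Items: (index, logit, is_positive, IoU).  Positives: (index, logit, IoU).
  Negatives: (index, logit).  Buckets: (b_k, prototype logit).\<close>


fun before :: "'a \<times> real \<times> bool \<times> real \<Rightarrow> 'a \<times> real \<times> bool \<times> real \<Rightarrow> bool" where
  "before (i, s, p, u) (j, t, q, v) = (t < s \<or> (s = t \<and> p))"

fun merge :: "('a \<times> real \<times> bool \<times> real) list \<Rightarrow> ('a \<times> real \<times> bool \<times> real) list \<Rightarrow>
              ('a \<times> real \<times> bool \<times> real) list" where
  "merge [] ys = ys"
| "merge xs [] = xs"
| "merge (x # xs) (y # ys) = (if before y x then y # merge (x # xs) ys else x # merge xs (y # ys))"

fun msort :: "('a \<times> real \<times> bool \<times> real) list \<Rightarrow> ('a \<times> real \<times> bool \<times> real) list" where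
  "msort xs = (let n = length xs in
     if n \<le> 1 then xs else merge (msort (take (n div 2) xs)) (msort (drop (n div 2) xs)))"

fun tagP :: "('a \<times> real \<times> real) list \<Rightarrow> ('a \<times> real \<times> bool \<times> real) list" where
  "tagP [] = []"
| "tagP ((i, s, u) # xs) = (i, s, True, u) # tagP xs"

fun tagN :: "('a \<times> real) list \<Rightarrow> ('a \<times> real \<times> bool \<times> real) list" where
  "tagN [] = []"
| "tagN ((i, s) # xs) = (i, s, False, 0) # tagN xs"

text \<open>Step (2): one pass over the sorted list forming buckets (reversed) and positives (reversed).\<close>
fun split_pass :: "('a \<times> real \<times> bool \<times> real) list \<Rightarrow> real \<Rightarrow> real \<Rightarrow> (real \<times> real) list \<Rightarrow>
     ('a \<times> real \<times> real) list \<Rightarrow> (real \<times> real) list \<times> ('a \<times> real \<times> real) list" where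
  "split_pass [] b t bs ps = ((b, t / b) # bs, ps)"
| "split_pass ((i, s, p, u) # xs) b t bs ps =
     (if p then split_pass xs 0 0 ((b, t / b) # bs) ((i, s, u) # ps)
      else split_pass xs (b + 1) (t + s) bs ps)"

fun rlen :: "'b list \<Rightarrow> real" where
  "rlen [] = 0"
| "rlen (x # xs) = rlen xs + 1"

fun zeros :: "'b list \<Rightarrow> real list" where
  "zeros [] = []"
| "zeros (x # xs) = 0 # zeros xs"

fun nfp :: "real \<Rightarrow> real \<Rightarrow> (real \<times> real) list \<Rightarrow> real" where
  "nfp d si [] = 0"
| "nfp d si ((b, m) # bs) = Hstep d (m - si) * b + nfp d si bs"

fun rankp :: "real \<Rightarrow> real \<Rightarrow> ('a \<times> real \<times> real) list \<Rightarrow> real" where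
  "rankp d si [] = 0"
| "rankp d si ((j, sj, uj) # ps) = Hstep d (sj - si) + rankp d si ps"

definition lRf :: "real \<Rightarrow> real \<Rightarrow> (real \<times> real) list \<Rightarrow> ('a \<times> real \<times> real) list \<Rightarrow> real" where
  "lRf d si bs ps = nfp d si bs / (rankp d si ps + nfp d si bs)"

text \<open>Step (5)/(10): add the primary terms of one positive to the prototype accumulators.\<close>
fun addprim :: "real \<Rightarrow> real \<Rightarrow> real \<Rightarrow> (real \<times> real) list \<Rightarrow> real list \<Rightarrow> real list" where
  "addprim d si c ((b, m) # bs) (g # gs) = (g + c * (b * Hstep d (m - si))) # addprim d si c bs gs"
| "addprim d si c bs gs = gs"

fun accum :: "real \<Rightarrow> (real \<times> real) list \<Rightarrow> ('a \<times> real \<times> real) list \<Rightarrow> ('a \<times> real \<times> real) list \<Rightarrow>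
              real list \<Rightarrow> real list" where
  "accum d bs allps [] G = G"
| "accum d bs allps ((i, si, ui) # qs) G =
     accum d bs allps qs (addprim d si (lRf d si bs allps / nfp d si bs) bs G)"

text \<open>Steps (11)/(12) for negatives: walk the sorted list, moving to the next bucket at each positive.\<close>
fun assign :: "real \<Rightarrow> ('a \<times> real \<times> bool \<times> real) list \<Rightarrow> (real \<times> real) list \<Rightarrow> real list \<Rightarrow>
               ('a \<times> real) list" where
  "assign np ((i, s, p, u) # xs) ((b, m) # bs) (g # gs) =
     (if p then assign np xs bs gs else (i, g / (b * np)) # assign np xs ((b, m) # bs) (g # gs))"
| "assign np xs bs gs = []"

fun posAP :: "real \<Rightarrow> real \<Rightarrow> (real \<times> real) list \<Rightarrow> ('a \<times> real \<times> real) list \<Rightarrow>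
              ('a \<times> real \<times> real) list \<Rightarrow> ('a \<times> real) list" where
  "posAP d np bs allps [] = []"
| "posAP d np bs allps ((i, si, ui) # qs) = (i, (0 - lRf d si bs allps) / np) # posAP d np bs allps qs"

fun sortnum :: "real \<Rightarrow> real \<Rightarrow> ('a \<times> real \<times> real) list \<Rightarrow> real" where
  "sortnum d si [] = 0"
| "sortnum d si ((j, sj, uj) # ps) = Hstep d (sj - si) * (1 - uj) + sortnum d si ps"

fun tnum :: "real \<Rightarrow> real \<Rightarrow> real \<Rightarrow> ('a \<times> real \<times> real) list \<Rightarrow> real" where
  "tnum d si ui [] = 0"
| "tnum d si ui ((j, sj, uj) # ps) = Hstep d (sj - si) * iv (ui \<le> uj) * (1 - uj) + tnum d si ui ps"

fun tden :: "real \<Rightarrow> real \<Rightarrow> real \<Rightarrow> ('a \<times> real \<times> real) list \<Rightarrow> real" where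
  "tden d si ui [] = 0"
| "tden d si ui ((j, sj, uj) # ps) = Hstep d (sj - si) * iv (ui \<le> uj) + tden d si ui ps"

fun pden :: "real \<Rightarrow> real \<Rightarrow> real \<Rightarrow> ('a \<times> real \<times> real) list \<Rightarrow> real" where
  "pden d sj uj [] = 0"
| "pden d sj uj ((k, sk, uk) # ps) = Hstep d (sk - sj) * iv (uk < uj) + pden d sj uj ps"

definition lSf :: "real \<Rightarrow> real \<Rightarrow> ('a \<times> real \<times> real) list \<Rightarrow> real" where
  "lSf d si ps = sortnum d si ps / rankp d si ps"

definition lStf :: "real \<Rightarrow> real \<Rightarrow> real \<Rightarrow> ('a \<times> real \<times> real) list \<Rightarrow> real" where
  "lStf d si ui ps = tnum d si ui ps / tden d si ui ps"

text \<open>Steps (6)-(8): per positive j: (s_j, IoU_j, l_S(j) - l*_S(j), denominator of p_S(.|j)).\<close>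
fun mkQ :: "real \<Rightarrow> ('a \<times> real \<times> real) list \<Rightarrow> ('a \<times> real \<times> real) list \<Rightarrow>
            (real \<times> real \<times> real \<times> real) list" where
  "mkQ d allps [] = []"
| "mkQ d allps ((j, sj, uj) # qs) =
     (sj, uj, lSf d sj allps - lStf d sj uj allps, pden d sj uj allps) # mkQ d allps qs"

fun cross :: "real \<Rightarrow> real \<Rightarrow> real \<Rightarrow> (real \<times> real \<times> real \<times> real) list \<Rightarrow> real" where
  "cross d si ui [] = 0"
| "cross d si ui ((sj, uj, e, D) # qs) = e * (Hstep d (si - sj) * iv (ui < uj) / D) + cross d si ui qs"

fun posRS :: "real \<Rightarrow> real \<Rightarrow> (real \<times> real) list \<Rightarrow> ('a \<times> real \<times> real) list \<Rightarrow>
              (real \<times> real \<times> real \<times> real) list \<Rightarrow> ('a \<times> real \<times> real) list \<Rightarrow> ('a \<times> real) list" where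
  "posRS d np bs allps Q [] = []"
| "posRS d np bs allps Q ((i, si, ui) # qs) =
     (i, (0 - lRf d si bs allps + lStf d si ui allps - lSf d si allps + cross d si ui Q) / np)
       # posRS d np bs allps Q qs"

definition bucketed_AP :: "real \<Rightarrow> ('a \<times> real \<times> real) list \<Rightarrow> ('a \<times> real) list \<Rightarrow> ('a \<times> real) list" where
  "bucketed_AP d ps ns =
    (let L = msort (tagP ps @ tagN ns);
         r = split_pass L 0 0 [] [];
         bs = itrev (fst r) [];
         P = itrev (snd r) [];
         np = rlen P;
         G = accum d bs P P (zeros bs)
     in posAP d np bs P P @ assign np L bs G)"

definition bucketed_RS :: "real \<Rightarrow> ('a \<times> real \<times> real) list \<Rightarrow> ('a \<times> real) list \<Rightarrow> ('a \<times> real) list" where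
  "bucketed_RS d ps ns =
    (let L = msort (tagP ps @ tagN ns);
         r = split_pass L 0 0 [] [];
         bs = itrev (fst r) [];
         P = itrev (snd r) [];
         np = rlen P;
         G = accum d bs P P (zeros bs);
         Q = mkQ d P P
     in posRS d np bs P Q P @ assign np L bs G)"

section \<open>Step-counting running-time functions\<close>

text \<open>Written by hand following the translation of the HOL-Library time framework:
  every call of a user-defined function costs 1 plus the cost of evaluating its body,
  where the cost of a call is the sum of the costs of its arguments and of the callee;
  real arithmetic, comparisons, constructors, and the Boolean connectives cost 0.
  The library time functions T_length, T_take, T_drop, T_append, T_itrev, T_fst, T_snd
  of HOL-Library.Time_Functions are reused.\<close>

definition T_Hstep :: "real \<Rightarrow> real \<Rightarrow> nat" where "T_Hstep d x = 1"
definition T_iv :: "bool \<Rightarrow> nat" where "T_iv b = 1"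
definition T_before :: "'a \<times> real \<times> bool \<times> real \<Rightarrow> 'a \<times> real \<times> bool \<times> real \<Rightarrow> nat" where
  "T_before x y = 1"

fun T_merge :: "('a \<times> real \<times> bool \<times> real) list \<Rightarrow> ('a \<times> real \<times> bool \<times> real) list \<Rightarrow> nat" where
  "T_merge [] ys = 1"
| "T_merge xs [] = 1"
| "T_merge (x # xs) (y # ys) = T_before y x +
     (if before y x then T_merge (x # xs) ys else T_merge xs (y # ys)) + 1"

fun T_msort :: "('a \<times> real \<times> bool \<times> real) list \<Rightarrow> nat" where
  "T_msort xs = T_length xs + (let n = length xs in
     if n \<le> 1 then 0
     else T_take (n div 2) xs + T_drop (n div 2) xs
          + T_msort (take (n div 2) xs) + T_msort (drop (n div 2) xs)
          + T_merge (msort (take (n div 2) xs)) (msort (drop (n div 2) xs))) + 1"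

fun T_tagP :: "('a \<times> real \<times> real) list \<Rightarrow> nat" where
  "T_tagP [] = 1"
| "T_tagP (x # xs) = T_tagP xs + 1"

fun T_tagN :: "('a \<times> real) list \<Rightarrow> nat" where
  "T_tagN [] = 1"
| "T_tagN (x # xs) = T_tagN xs + 1"

fun T_split_pass :: "('a \<times> real \<times> bool \<times> real) list \<Rightarrow> real \<Rightarrow> real \<Rightarrow> (real \<times> real) list \<Rightarrow>
     ('a \<times> real \<times> real) list \<Rightarrow> nat" where
  "T_split_pass [] b t bs ps = 1"
| "T_split_pass ((i, s, p, u) # xs) b t bs ps =
     (if p then T_split_pass xs 0 0 ((b, t / b) # bs) ((i, s, u) # ps)
      else T_split_pass xs (b + 1) (t + s) bs ps) + 1"

fun T_rlen :: "'b list \<Rightarrow> nat" where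
  "T_rlen [] = 1"
| "T_rlen (x # xs) = T_rlen xs + 1"

fun T_zeros :: "'b list \<Rightarrow> nat" where
  "T_zeros [] = 1"
| "T_zeros (x # xs) = T_zeros xs + 1"

fun T_nfp :: "real \<Rightarrow> real \<Rightarrow> (real \<times> real) list \<Rightarrow> nat" where
  "T_nfp d si [] = 1"
| "T_nfp d si ((b, m) # bs) = T_Hstep d (m - si) + T_nfp d si bs + 1"

fun T_rankp :: "real \<Rightarrow> real \<Rightarrow> ('a \<times> real \<times> real) list \<Rightarrow> nat" where
  "T_rankp d si [] = 1"
| "T_rankp d si ((j, sj, uj) # ps) = T_Hstep d (sj - si) + T_rankp d si ps + 1"

definition T_lRf :: "real \<Rightarrow> real \<Rightarrow> (real \<times> real) list \<Rightarrow> ('a \<times> real \<times> real) list \<Rightarrow> nat" where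
  "T_lRf d si bs ps = T_nfp d si bs + T_rankp d si ps + T_nfp d si bs + 1"

fun T_addprim :: "real \<Rightarrow> real \<Rightarrow> real \<Rightarrow> (real \<times> real) list \<Rightarrow> real list \<Rightarrow> nat" where
  "T_addprim d si c ((b, m) # bs) (g # gs) = T_Hstep d (m - si) + T_addprim d si c bs gs + 1"
| "T_addprim d si c bs gs = 1"

fun T_accum :: "real \<Rightarrow> (real \<times> real) list \<Rightarrow> ('a \<times> real \<times> real) list \<Rightarrow> ('a \<times> real \<times> real) list \<Rightarrow>
              real list \<Rightarrow> nat" where
  "T_accum d bs allps [] G = 1"
| "T_accum d bs allps ((i, si, ui) # qs) G =
     T_lRf d si bs allps + T_nfp d si bs
     + T_addprim d si (lRf d si bs allps / nfp d si bs) bs G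
     + T_accum d bs allps qs (addprim d si (lRf d si bs allps / nfp d si bs) bs G) + 1"

fun T_assign :: "real \<Rightarrow> ('a \<times> real \<times> bool \<times> real) list \<Rightarrow> (real \<times> real) list \<Rightarrow> real list \<Rightarrow> nat" where
  "T_assign np ((i, s, p, u) # xs) ((b, m) # bs) (g # gs) =
     (if p then T_assign np xs bs gs else T_assign np xs ((b, m) # bs) (g # gs)) + 1"
| "T_assign np xs bs gs = 1"

fun T_posAP :: "real \<Rightarrow> real \<Rightarrow> (real \<times> real) list \<Rightarrow> ('a \<times> real \<times> real) list \<Rightarrow>
              ('a \<times> real \<times> real) list \<Rightarrow> nat" where
  "T_posAP d np bs allps [] = 1"
| "T_posAP d np bs allps ((i, si, ui) # qs) = T_lRf d si bs allps + T_posAP d np bs allps qs + 1"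

fun T_sortnum :: "real \<Rightarrow> real \<Rightarrow> ('a \<times> real \<times> real) list \<Rightarrow> nat" where
  "T_sortnum d si [] = 1"
| "T_sortnum d si ((j, sj, uj) # ps) = T_Hstep d (sj - si) + T_sortnum d si ps + 1"

fun T_tnum :: "real \<Rightarrow> real \<Rightarrow> real \<Rightarrow> ('a \<times> real \<times> real) list \<Rightarrow> nat" where
  "T_tnum d si ui [] = 1"
| "T_tnum d si ui ((j, sj, uj) # ps) = T_Hstep d (sj - si) + T_iv (ui \<le> uj) + T_tnum d si ui ps + 1"

fun T_tden :: "real \<Rightarrow> real \<Rightarrow> real \<Rightarrow> ('a \<times> real \<times> real) list \<Rightarrow> nat" where
  "T_tden d si ui [] = 1"
| "T_tden d si ui ((j, sj, uj) # ps) = T_Hstep d (sj - si) + T_iv (ui \<le> uj) + T_tden d si ui ps + 1"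

fun T_pden :: "real \<Rightarrow> real \<Rightarrow> real \<Rightarrow> ('a \<times> real \<times> real) list \<Rightarrow> nat" where
  "T_pden d sj uj [] = 1"
| "T_pden d sj uj ((k, sk, uk) # ps) = T_Hstep d (sk - sj) + T_iv (uk < uj) + T_pden d sj uj ps + 1"

definition T_lSf :: "real \<Rightarrow> real \<Rightarrow> ('a \<times> real \<times> real) list \<Rightarrow> nat" where
  "T_lSf d si ps = T_sortnum d si ps + T_rankp d si ps + 1"

definition T_lStf :: "real \<Rightarrow> real \<Rightarrow> real \<Rightarrow> ('a \<times> real \<times> real) list \<Rightarrow> nat" where
  "T_lStf d si ui ps = T_tnum d si ui ps + T_tden d si ui ps + 1"

fun T_mkQ :: "real \<Rightarrow> ('a \<times> real \<times> real) list \<Rightarrow> ('a \<times> real \<times> real) list \<Rightarrow> nat" where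
  "T_mkQ d allps [] = 1"
| "T_mkQ d allps ((j, sj, uj) # qs) =
     T_lSf d sj allps + T_lStf d sj uj allps + T_pden d sj uj allps + T_mkQ d allps qs + 1"

fun T_cross :: "real \<Rightarrow> real \<Rightarrow> real \<Rightarrow> (real \<times> real \<times> real \<times> real) list \<Rightarrow> nat" where
  "T_cross d si ui [] = 1"
| "T_cross d si ui ((sj, uj, e, D) # qs) = T_Hstep d (si - sj) + T_iv (ui < uj) + T_cross d si ui qs + 1"

fun T_posRS :: "real \<Rightarrow> real \<Rightarrow> (real \<times> real) list \<Rightarrow> ('a \<times> real \<times> real) list \<Rightarrow>
              (real \<times> real \<times> real \<times> real) list \<Rightarrow> ('a \<times> real \<times> real) list \<Rightarrow> nat" where
  "T_posRS d np bs allps Q [] = 1"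
| "T_posRS d np bs allps Q ((i, si, ui) # qs) =
     T_lRf d si bs allps + T_lStf d si ui allps + T_lSf d si allps + T_cross d si ui Q
     + T_posRS d np bs allps Q qs + 1"

definition T_bucketed_AP :: "real \<Rightarrow> ('a \<times> real \<times> real) list \<Rightarrow> ('a \<times> real) list \<Rightarrow> nat" where
  "T_bucketed_AP d ps ns =
    (let tP = tagP ps; tN = tagN ns; A = tP @ tN; L = msort A;
         r = split_pass L 0 0 [] [];
         bs = itrev (fst r) [];
         P = itrev (snd r) [];
         np = rlen P;
         Z = zeros bs;
         G = accum d bs P P Z;
         out1 = posAP d np bs P P;
         out2 = assign np L bs G
     in T_tagP ps + T_tagN ns + T_append tP tN + T_msort A
        + T_split_pass L 0 0 [] [] + T_fst r + T_itrev (fst r) [] + T_snd r + T_itrev (snd r) []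
        + T_rlen P + T_zeros bs + T_accum d bs P P Z + T_posAP d np bs P P
        + T_assign np L bs G + T_append out1 out2 + 1)"

definition T_bucketed_RS :: "real \<Rightarrow> ('a \<times> real \<times> real) list \<Rightarrow> ('a \<times> real) list \<Rightarrow> nat" where
  "T_bucketed_RS d ps ns =
    (let tP = tagP ps; tN = tagN ns; A = tP @ tN; L = msort A;
         r = split_pass L 0 0 [] [];
         bs = itrev (fst r) [];
         P = itrev (snd r) [];
         np = rlen P;
         Z = zeros bs;
         G = accum d bs P P Z;
         Q = mkQ d P P;
         out1 = posRS d np bs P Q P;
         out2 = assign np L bs G
     in T_tagP ps + T_tagN ns + T_append tP tN + T_msort A
        + T_split_pass L 0 0 [] [] + T_fst r + T_itrev (fst r) [] + T_snd r + T_itrev (snd r) []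
        + T_rlen P + T_zeros bs + T_accum d bs P P Z + T_mkQ d P P + T_posRS d np bs P Q P
        + T_assign np L bs G + T_append out1 out2 + 1)"

end

theory Submission
  imports Defs "HOL-Library.Multiset"
begin

text \<open>Merge sort orders the items by decreasing logit, a positive ahead of any negative of
  equal logit, in \<open>O(n log n)\<close> steps. In this order the negatives between two consecutive
  positives form exactly one bucket, so a single pass yields the \<open>|P| + 1\<close> bucket sizes and
  prototype logits, and a second pass hands each negative the accumulated gradient of its
  bucket. Every remaining loop runs over positives \<open>\<times>\<close> prototypes or positives \<open>\<times>\<close>
  positives, costing \<open>O(|P|\<^sup>2)\<close>, and evaluates as a list sum exactly the finite sum over
  \<open>P\<close> or over the buckets that defines the paper's quantity.\<close>

declare msort.simps [simp del] T_msort.simps [simp del]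

type_synonym 'a item = "'a \<times> real \<times> bool \<times> real"

section \<open>Merge sort by decreasing logit\<close>

fun logit_order :: "'a item \<Rightarrow> 'a item \<Rightarrow> bool" where
  "logit_order (i, s, p, u) (j, t, q, v) \<longleftrightarrow> t < s \<or> s = t \<and> (p \<or> \<not> q)"

lemma logit_order_trans: "logit_order x y \<Longrightarrow> logit_order y z \<Longrightarrow> logit_order x z"
  by (cases x; cases y; cases z) auto

lemma logit_order_if_before: "before y x \<Longrightarrow> logit_order y x"
  by (cases x; cases y) auto

lemma logit_order_if_not_before: "\<not> before y x \<Longrightarrow> logit_order x y"
  by (cases x; cases y) auto

lemma mset_merge [simp]: "mset (merge xs ys) = mset xs + mset ys"
  by (induction xs ys rule: merge.induct) auto

lemma sorted_wrt_merge:
  "sorted_wrt logit_order xs \<Longrightarrow> sorted_wrt logit_order ys \<Longrightarrow>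
   sorted_wrt logit_order (merge xs ys)"
proof (induction xs ys rule: merge.induct)
  case (3 x xs y ys)
  show ?case
  proof (cases "before y x")
    case True
    then have "\<forall>z\<in>set (x # xs). logit_order y z"
      using "3.prems"(1) by (auto intro: logit_order_trans logit_order_if_before)
    with 3 True show ?thesis by (auto simp flip: set_mset_mset)
  next
    case False
    then have "\<forall>z\<in>set (y # ys). logit_order x z"
      using "3.prems"(2) by (auto intro: logit_order_trans logit_order_if_not_before)
    with 3 False show ?thesis by (auto simp flip: set_mset_mset)
  qed
qed auto

lemma mset_msort [simp]: "mset (msort xs) = mset xs"
proof (induction xs rule: msort.induct)
  case (1 xs)
  then show ?case
    by (subst msort.simps) (auto simp: Let_def simp flip: mset_append)
qed

lemma length_msort [simp]: "length (msort xs) = length xs"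
  by (metis mset_msort size_mset)

lemma sorted_wrt_msort: "sorted_wrt logit_order (msort xs)"
proof (induction xs rule: msort.induct)
  case (1 xs)
  have "sorted_wrt logit_order xs" if "length xs \<le> 1"
    using that by (cases xs) auto
  with 1 show ?case
    by (subst msort.simps) (auto simp: Let_def intro!: sorted_wrt_merge)
qed

lemma T_merge_le: "T_merge xs ys \<le> 2 * (length xs + length ys) + 1"
  by (induction xs ys rule: T_merge.induct) (auto simp: T_before_def)

lemma T_msort_le:
  "1 \<le> length xs \<Longrightarrow> length xs \<le> 2 ^ k \<Longrightarrow>
   T_msort xs \<le> 7 * length xs * k + 3 * length xs"
proof (induction xs arbitrary: k rule: T_msort.induct)
  case (1 xs)
  define n h where "n = length xs" and "h = n div 2"
  show ?case
  proof (cases "n \<le> 1")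
    case True
    with "1.prems" show ?thesis by (subst T_msort.simps) (simp add: T_length n_def)
  next
    case False
    then obtain k' where k: "k = Suc k'"
      using "1.prems"(2) by (cases k) (auto simp: n_def)
    have "T_msort (take h xs) \<le> 7 * h * k' + 3 * h"
      using "1.IH"(1)[of n k'] "1.prems"(2) False k by (simp add: n_def h_def)
    moreover have "T_msort (drop h xs) \<le> 7 * (n - h) * k' + 3 * (n - h)"
      using "1.IH"(2)[of n k'] "1.prems"(2) False k by (simp add: n_def h_def)
    moreover have "T_merge (msort (take h xs)) (msort (drop h xs)) \<le> 2 * n + 1"
      using T_merge_le[of "msort (take h xs)" "msort (drop h xs)"]
      by (simp add: n_def h_def)
    moreover have "7 * h * k' + 7 * (n - h) * k' = 7 * n * k'"
      using le_add_diff_inverse[of h n]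
      by (metis add_mult_distrib add_mult_distrib2 div_le_dividend h_def)
    moreover have "T_msort xs = n + T_take h xs + T_drop h xs + T_msort (take h xs)
        + T_msort (drop h xs) + T_merge (msort (take h xs)) (msort (drop h xs)) + 2"
      using False by (subst T_msort.simps) (simp add: T_length Let_def n_def h_def)
    moreover have "2 * h \<le> n"
      by (simp add: h_def)
    ultimately show ?thesis
      using False by (simp add: T_take T_drop k n_def [symmetric] h_def [symmetric])
  qed
qed

lemma ex_pow2_ge_log_bound: "1 \<le> n \<Longrightarrow> \<exists>k. n \<le> 2 ^ k \<and> real k \<le> log 2 (real n) + 1"
proof -
  assume n: "1 \<le> n"
  define k where "k = nat \<lceil>log 2 (real n)\<rceil>"
  have k_eq: "real k = of_int \<lceil>log 2 (real n)\<rceil>"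
    using n by (simp add: k_def)
  have "real n = 2 powr (log 2 (real n))"
    using n by simp
  also have "\<dots> \<le> 2 powr (real k)"
    unfolding k_eq by (intro powr_mono) auto
  finally have "real n \<le> 2 ^ k"
    by (simp add: powr_realpow)
  then have "n \<le> 2 ^ k"
    by (metis of_nat_le_iff of_nat_numeral of_nat_power)
  moreover have "real k \<le> log 2 (real n) + 1"
    unfolding k_eq by linarith
  ultimately show ?thesis by blast
qed

lemma T_msort_le_log:
  assumes "xs \<noteq> []"
  shows "real (T_msort xs) \<le> 7 * real (length xs) * log 2 (length xs) + 10 * real (length xs)"
proof -
  define n where "n = length xs"
  have "1 \<le> n"
    using assms by (simp add: n_def Suc_le_eq)
  then obtain k where k: "n \<le> 2 ^ k" "real k \<le> log 2 (real n) + 1"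
    using ex_pow2_ge_log_bound by blast
  have "T_msort xs \<le> 7 * n * k + 3 * n"
    using T_msort_le[of xs k] \<open>1 \<le> n\<close> k(1) by (simp add: n_def)
  then have "real (T_msort xs) \<le> real (7 * n * k + 3 * n)"
    by (rule of_nat_mono)
  also have "\<dots> = 7 * real n * real k + 3 * real n"
    by simp
  also have "\<dots> \<le> 7 * real n * (log 2 (real n) + 1) + 3 * real n"
    using k(2) by (intro add_right_mono mult_left_mono) auto
  finally show ?thesis
    by (simp add: n_def algebra_simps)
qed

section \<open>The buckets of a sorted item list\<close>

definition pos_items :: "'a item list \<Rightarrow> ('a \<times> real \<times> real) list" where
  "pos_items L = map (\<lambda>(i, s, p, u). (i, s, u)) (filter (\<lambda>x. fst (snd (snd x))) L)"

definition neg_items :: "'a item list \<Rightarrow> ('a \<times> real) list" where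
  "neg_items L = map (\<lambda>(i, s, p, u). (i, s)) (filter (\<lambda>x. \<not> fst (snd (snd x))) L)"

definition npos_above :: "'a item list \<Rightarrow> real \<Rightarrow> nat" where
  "npos_above L x = length (filter (\<lambda>(i, s, u). x \<le> s) (pos_items L))"

text \<open>\<open>bucket_items L k\<close> is the paper's bucket \<open>B\<^sub>k\<^sub>+\<^sub>1\<close>.\<close>
definition bucket_items :: "'a item list \<Rightarrow> nat \<Rightarrow> ('a \<times> real) list" where
  "bucket_items L k = filter (\<lambda>(x, sx). npos_above L sx = k) (neg_items L)"

definition bucket_stat :: "real \<Rightarrow> real \<Rightarrow> ('a \<times> real) list \<Rightarrow> real \<times> real" where
  "bucket_stat b t S = (b + real (length S), (t + sum_list (map snd S)) / (b + real (length S)))"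

text \<open>What \<open>split_pass\<close> emits on \<open>L\<close> when the open bucket already holds \<open>b\<close> negatives
  of total logit \<open>t\<close>.\<close>
definition buckets :: "real \<Rightarrow> real \<Rightarrow> 'a item list \<Rightarrow> (real \<times> real) list" where
  "buckets b t L = bucket_stat b t (bucket_items L 0)
     # map (\<lambda>k. bucket_stat 0 0 (bucket_items L (Suc k))) [0..<length (pos_items L)]"

lemma pos_items_simps [simp]:
  "pos_items [] = []"
  "pos_items ((i, s, True, u) # L) = (i, s, u) # pos_items L"
  "pos_items ((i, s, False, u) # L) = pos_items L"
  by (auto simp: pos_items_def)

lemma neg_items_simps [simp]:
  "neg_items [] = []"
  "neg_items ((i, s, True, u) # L) = neg_items L"
  "neg_items ((i, s, False, u) # L) = (i, s) # neg_items L"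
  by (auto simp: neg_items_def)

lemma npos_above_Cons_neg [simp]: "npos_above ((i, s, False, u) # L) = npos_above L"
  by (simp add: npos_above_def fun_eq_iff)

lemma npos_above_Cons_pos:
  assumes "sorted_wrt logit_order ((i, s, True, u) # L)" and "(x, sx) \<in> set (neg_items L)"
  shows "npos_above ((i, s, True, u) # L) sx = Suc (npos_above L sx)"
proof -
  have "sx \<le> s"
    using assms by (fastforce simp: neg_items_def)
  then show ?thesis
    by (simp add: npos_above_def)
qed

lemma npos_above_head_neg:
  assumes "sorted_wrt logit_order ((i, s, False, u) # L)"
  shows "npos_above L s = 0"
proof -
  have "sx < s" if "(x, sx, ux) \<in> set (pos_items L)" for x sx ux
    using assms that by (auto simp: pos_items_def)
  then show ?thesis
    by (force simp: npos_above_def filter_empty_conv)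
qed

lemma buckets_Cons_pos:
  assumes "sorted_wrt logit_order ((i, s, True, u) # L)"
  shows "buckets b t ((i, s, True, u) # L) = (b, t / b) # buckets 0 0 L"
proof -
  have "bucket_items ((i, s, True, u) # L) k = (if k = 0 then [] else bucket_items L (k - 1))" for k
    using npos_above_Cons_pos[OF assms]
    by (cases k) (auto simp: bucket_items_def filter_empty_conv intro!: filter_cong)
  then show ?thesis
    by (simp add: buckets_def bucket_stat_def upt_conv_Cons map_Suc_upt [symmetric] del: upt_Suc)
qed

lemma buckets_Cons_neg:
  assumes "sorted_wrt logit_order ((i, s, False, u) # L)"
  shows "buckets b t ((i, s, False, u) # L) = buckets (b + 1) (t + s) L"
proof -
  have "bucket_items ((i, s, False, u) # L) 0 = (i, s) # bucket_items L 0"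
    using npos_above_head_neg[OF assms] by (simp add: bucket_items_def)
  moreover have "bucket_items ((i, s, False, u) # L) (Suc k) = bucket_items L (Suc k)" for k
    using npos_above_head_neg[OF assms] by (simp add: bucket_items_def)
  ultimately show ?thesis
    by (simp add: buckets_def bucket_stat_def algebra_simps)
qed

lemma fst_split_pass:
  "sorted_wrt logit_order L \<Longrightarrow> fst (split_pass L b t bs ps) = rev (buckets b t L) @ bs"
proof (induction L arbitrary: b t bs ps)
  case Nil
  then show ?case by (simp add: buckets_def bucket_items_def bucket_stat_def)
next
  case (Cons x L)
  obtain i s p u where x: "x = (i, s, p, u)" by (cases x)
  with Cons show ?case
    by (cases p) (simp_all add: buckets_Cons_pos buckets_Cons_neg)
qed

lemma snd_split_pass: "snd (split_pass L b t bs ps) = rev (pos_items L) @ ps"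
proof (induction L arbitrary: b t bs ps)
  case (Cons x L)
  obtain i s p u where x: "x = (i, s, p, u)" by (cases x)
  with Cons show ?case by (cases p) simp_all
qed simp

lemma assign_eq_map:
  assumes "sorted_wrt logit_order L" and "length (pos_items L) < length bs"
    and "length G = length bs"
  shows "assign np L bs G =
    map (\<lambda>(x, sx). (x, G ! npos_above L sx / (fst (bs ! npos_above L sx) * np))) (neg_items L)"
  using assms
proof (induction L arbitrary: bs G)
  case (Cons x L)
  obtain i s p u where x: "x = (i, s, p, u)" by (cases x)
  obtain b m bs' g G' where bs: "bs = (b, m) # bs'" and G: "G = g # G'"
    using Cons.prems(2,3) by (cases bs; cases G) auto
  show ?case
  proof (cases p)
    case True
    with Cons x bs G show ?thesis
      by (auto simp: npos_above_Cons_pos)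
  next
    case False
    with Cons.prems(1) x have "sorted_wrt logit_order ((i, s, False, u) # L)"
      by simp
    then have "npos_above L s = 0"
      by (rule npos_above_head_neg)
    with Cons x bs G False show ?thesis
      by simp
  qed
qed simp

section \<open>The loops of the algorithm as list sums\<close>

lemma nfp_eq: "nfp d si bs = (\<Sum>(b, m)\<leftarrow>bs. Hstep d (m - si) * b)"
  by (induction d si bs rule: nfp.induct) auto

lemma rankp_eq: "rankp d si ps = (\<Sum>(j, sj, uj)\<leftarrow>ps. Hstep d (sj - si))"
  by (induction d si ps rule: rankp.induct) auto

lemma sortnum_eq: "sortnum d si ps = (\<Sum>(j, sj, uj)\<leftarrow>ps. Hstep d (sj - si) * (1 - uj))"
  by (induction d si ps rule: sortnum.induct) auto

lemma tnum_eq: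
  "tnum d si ui ps = (\<Sum>(j, sj, uj)\<leftarrow>ps. Hstep d (sj - si) * iv (ui \<le> uj) * (1 - uj))"
  by (induction d si ui ps rule: tnum.induct) auto

lemma tden_eq: "tden d si ui ps = (\<Sum>(j, sj, uj)\<leftarrow>ps. Hstep d (sj - si) * iv (ui \<le> uj))"
  by (induction d si ui ps rule: tden.induct) auto

lemma pden_eq: "pden d sj uj ps = (\<Sum>(k, sk, uk)\<leftarrow>ps. Hstep d (sk - sj) * iv (uk < uj))"
  by (induction d sj uj ps rule: pden.induct) auto

lemma cross_eq:
  "cross d si ui Q = (\<Sum>(sj, uj, e, D)\<leftarrow>Q. e * (Hstep d (si - sj) * iv (ui < uj) / D))"
  by (induction d si ui Q rule: cross.induct) auto

lemma mkQ_eq: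
  "mkQ d allps qs =
     map (\<lambda>(j, sj, uj). (sj, uj, lSf d sj allps - lStf d sj uj allps, pden d sj uj allps)) qs"
  by (induction d allps qs rule: mkQ.induct) auto

lemma posAP_eq: "posAP d np bs allps qs = map (\<lambda>(i, si, ui). (i, (0 - lRf d si bs allps) / np)) qs"
  by (induction d np bs allps qs rule: posAP.induct) auto

lemma posRS_eq:
  "posRS d np bs allps Q qs = map (\<lambda>(i, si, ui).
     (i, (0 - lRf d si bs allps + lStf d si ui allps - lSf d si allps + cross d si ui Q) / np)) qs"
  by (induction d np bs allps Q qs rule: posRS.induct) auto

lemma rlen_eq: "rlen xs = real (length xs)"
  by (induction xs) auto

lemma zeros_eq: "zeros xs = replicate (length xs) 0"
  by (induction xs) auto

lemma tagP_eq: "tagP ps = map (\<lambda>(i, s, u). (i, s, True, u)) ps"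
  by (induction ps rule: tagP.induct) auto

lemma tagN_eq: "tagN ns = map (\<lambda>(i, s). (i, s, False, 0)) ns"
  by (induction ns rule: tagN.induct) auto

lemma pos_items_tag: "pos_items (tagP ps @ tagN ns) = ps"
  by (simp add: pos_items_def tagP_eq tagN_eq filter_map o_def case_prod_unfold)

lemma neg_items_tag: "neg_items (tagP ps @ tagN ns) = ns"
  by (simp add: neg_items_def tagP_eq tagN_eq filter_map o_def case_prod_unfold)

lemma length_addprim [simp]: "length (addprim d si c bs G) = length G"
  by (induction d si c bs G rule: addprim.induct) auto

lemma nth_addprim:
  "length bs = length G \<Longrightarrow> k < length G \<Longrightarrow>
   addprim d si c bs G ! k = G ! k + c * (fst (bs ! k) * Hstep d (snd (bs ! k) - si))"
proof (induction d si c bs G arbitrary: k rule: addprim.induct)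
  case (1 d si c b m bs g gs)
  then show ?case by (cases k) auto
qed auto

lemma length_accum [simp]: "length (accum d bs allps qs G) = length G"
  by (induction d bs allps qs G rule: accum.induct) auto

lemma nth_accum:
  "length bs = length G \<Longrightarrow> k < length G \<Longrightarrow>
   accum d bs allps qs G ! k = G ! k + (\<Sum>(i, si, ui)\<leftarrow>qs.
     lRf d si bs allps / nfp d si bs * (fst (bs ! k) * Hstep d (snd (bs ! k) - si)))"
  by (induction d bs allps qs G rule: accum.induct) (auto simp: nth_addprim)

section \<open>Cost of the loops\<close>

lemma T_nfp_eq: "T_nfp d si bs = 2 * length bs + 1"
  by (induction d si bs rule: T_nfp.induct) (auto simp: T_Hstep_def)

lemma T_rankp_eq: "T_rankp d si ps = 2 * length ps + 1"
  by (induction d si ps rule: T_rankp.induct) (auto simp: T_Hstep_def)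

lemma T_addprim_le: "T_addprim d si c bs G \<le> 2 * length bs + 1"
  by (induction d si c bs G rule: T_addprim.induct) (auto simp: T_Hstep_def)

lemma T_sortnum_eq: "T_sortnum d si ps = 2 * length ps + 1"
  by (induction d si ps rule: T_sortnum.induct) (auto simp: T_Hstep_def)

lemma T_tnum_eq: "T_tnum d si ui ps = 3 * length ps + 1"
  by (induction d si ui ps rule: T_tnum.induct) (auto simp: T_Hstep_def T_iv_def)

lemma T_tden_eq: "T_tden d si ui ps = 3 * length ps + 1"
  by (induction d si ui ps rule: T_tden.induct) (auto simp: T_Hstep_def T_iv_def)

lemma T_pden_eq: "T_pden d si ui ps = 3 * length ps + 1"
  by (induction d si ui ps rule: T_pden.induct) (auto simp: T_Hstep_def T_iv_def)

lemma T_cross_eq: "T_cross d si ui Q = 3 * length Q + 1"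
  by (induction d si ui Q rule: T_cross.induct) (auto simp: T_Hstep_def T_iv_def)

lemma T_assign_le: "T_assign np xs bs G \<le> length xs + 1"
  by (induction np xs bs G rule: T_assign.induct) auto

lemma T_split_pass_eq: "T_split_pass L b t bs ps = length L + 1"
  by (induction L b t bs ps rule: T_split_pass.induct) auto

lemma T_tagP_eq: "T_tagP xs = length xs + 1"
  by (induction xs) auto

lemma T_tagN_eq: "T_tagN xs = length xs + 1"
  by (induction xs) auto

lemma T_rlen_eq: "T_rlen xs = length xs + 1"
  by (induction xs) auto

lemma T_zeros_eq: "T_zeros xs = length xs + 1"
  by (induction xs) auto

lemma T_lRf_eq: "T_lRf d si bs ps = 4 * length bs + 2 * length ps + 4"
  by (simp add: T_lRf_def T_nfp_eq T_rankp_eq)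

lemma T_lSf_eq: "T_lSf d si ps = 4 * length ps + 3"
  by (simp add: T_lSf_def T_sortnum_eq T_rankp_eq)

lemma T_lStf_eq: "T_lStf d si ui ps = 6 * length ps + 3"
  by (simp add: T_lStf_def T_tnum_eq T_tden_eq)

lemma T_accum_le:
  "T_accum d bs allps qs G \<le> length qs * (8 * length bs + 2 * length allps + 7) + 1"
proof (induction d bs allps qs G rule: T_accum.induct)
  case (2 d bs allps i si ui qs G)
  have "T_addprim d si (lRf d si bs allps / nfp d si bs) bs G \<le> 2 * length bs + 1"
    by (rule T_addprim_le)
  with 2 show ?case
    by (simp add: T_lRf_eq T_nfp_eq)
qed simp

lemma T_posAP_le:
  "T_posAP d np bs allps qs \<le> length qs * (4 * length bs + 2 * length allps + 5) + 1"
  by (induction d np bs allps qs rule: T_posAP.induct) (auto simp: T_lRf_eq)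

lemma T_mkQ_le: "T_mkQ d allps qs \<le> length qs * (13 * length allps + 8) + 1"
  by (induction d allps qs rule: T_mkQ.induct) (auto simp: T_lSf_eq T_lStf_eq T_pden_eq)

lemma T_posRS_le:
  "T_posRS d np bs allps Q qs \<le>
     length qs * (4 * length bs + 12 * length allps + 3 * length Q + 12) + 1"
  by (induction d np bs allps Q qs rule: T_posRS.induct)
    (auto simp: T_lRf_eq T_lSf_eq T_lStf_eq T_cross_eq)

lemma le_max_nlogn_sq:
  assumes "1 \<le> m" and "m \<le> n"
  shows "real n \<le> max (real n * log 2 (real n)) (real m ^ 2)"
proof (cases "n = 1")
  case True
  with assms show ?thesis by simp
next
  case False
  with assms have "1 \<le> log 2 (real n)"
    by simp
  then have "real n * 1 \<le> real n * log 2 (real n)"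
    by (intro mult_left_mono) auto
  then show ?thesis
    by simp
qed

lemma cost_le_max_nlogn_sq:
  fixes T T_sort m n :: nat
  assumes "1 \<le> m" and "m \<le> n"
    and "T \<le> T_sort + 3 * n + 42 * m ^ 2 + 50 * m + 20"
    and "real T_sort \<le> 7 * real n * log 2 (real n) + 10 * real n"
  shows "real T \<le> 132 * max (real n * log 2 (real n)) (real m ^ 2)"
proof -
  define M where "M = max (real n * log 2 (real n)) (real m ^ 2)"
  have "real n \<le> M"
    unfolding M_def using assms(1,2) by (rule le_max_nlogn_sq)
  moreover have "real m \<le> real m ^ 2"
    using assms(1) by (simp add: power2_eq_square)
  moreover have "1 \<le> real m ^ 2"
    using assms(1) by (simp add: one_le_power)
  moreover have "real n * log 2 (real n) \<le> M" and "real m ^ 2 \<le> M"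
    by (simp_all add: M_def)
  moreover have "real T \<le> real T_sort + 3 * real n + 42 * real m ^ 2 + 50 * real m + 20"
    using of_nat_mono[OF assms(3)] by simp
  ultimately show ?thesis
    using assms(4) unfolding M_def [symmetric] by linarith
qed

section \<open>Lists versus sets\<close>

lemma sum_list_map_mset_eq:
  fixes f :: "'a \<Rightarrow> 'b::comm_monoid_add"
  assumes "mset xs = mset ys"
  shows "(\<Sum>x\<leftarrow>xs. f x) = (\<Sum>x\<leftarrow>ys. f x)"
proof -
  have "mset (map f xs) = mset (map f ys)"
    using assms by simp
  then show ?thesis
    by (metis sum_mset_sum_list)
qed

lemma length_filter_mset_eq:
  assumes "mset xs = mset ys"
  shows "length (filter Q xs) = length (filter Q ys)"
proof -
  have "mset (filter Q xs) = mset (filter Q ys)"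
    using assms by simp
  then show ?thesis
    by (metis size_mset)
qed

lemma length_filter_map_distinct:
  assumes "distinct xs"
  shows "length (filter Q (map g xs)) = card {x \<in> set xs. Q (g x)}"
proof -
  have "length (filter (Q \<circ> g) xs) = card (set (filter (Q \<circ> g) xs))"
    using assms distinct_card [of "filter (Q \<circ> g) xs"] by simp
  then show ?thesis
    by (simp add: filter_map)
qed

lemma mset_pos_items_cong: "mset L = mset L' \<Longrightarrow> mset (pos_items L) = mset (pos_items L')"
  by (simp add: pos_items_def)

lemma mset_neg_items_cong: "mset L = mset L' \<Longrightarrow> mset (neg_items L) = mset (neg_items L')"
  by (simp add: neg_items_def)

section \<open>The algorithm on a concrete input\<close>

locale bucketed_input =
  fixes P N :: "'a set" and s iou :: "'a \<Rightarrow> real" and pl nl :: "'a list"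
  assumes disjoint: "P \<inter> N = {}"
    and distinct_pl: "distinct pl" and set_pl: "set pl = P"
    and distinct_nl: "distinct nl" and set_nl: "set nl = N"
begin

definition pos_input :: "('a \<times> real \<times> real) list" where
  "pos_input = map (\<lambda>i. (i, s i, iou i)) pl"

definition neg_input :: "('a \<times> real) list" where
  "neg_input = map (\<lambda>i. (i, s i)) nl"

definition sorted_items :: "'a item list" where
  "sorted_items = msort (tagP pos_input @ tagN neg_input)"

definition prototypes :: "(real \<times> real) list" where
  "prototypes = itrev (fst (split_pass sorted_items 0 0 [] [])) []"

definition sorted_pos :: "('a \<times> real \<times> real) list" where
  "sorted_pos = itrev (snd (split_pass sorted_items 0 0 [] [])) []"

definition grad_acc :: "real \<Rightarrow> real list" where
  "grad_acc d = accum d prototypes sorted_pos sorted_pos (zeros prototypes)"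

lemma bucketed_AP_unfold:
  "bucketed_AP d pos_input neg_input =
     posAP d (rlen sorted_pos) prototypes sorted_pos sorted_pos
     @ assign (rlen sorted_pos) sorted_items prototypes (grad_acc d)"
  by (simp add: bucketed_AP_def Let_def sorted_items_def prototypes_def sorted_pos_def grad_acc_def)

lemma bucketed_RS_unfold:
  "bucketed_RS d pos_input neg_input =
     posRS d (rlen sorted_pos) prototypes sorted_pos (mkQ d sorted_pos sorted_pos) sorted_pos
     @ assign (rlen sorted_pos) sorted_items prototypes (grad_acc d)"
  by (simp add: bucketed_RS_def Let_def sorted_items_def prototypes_def sorted_pos_def grad_acc_def)

lemma finite_P: "finite P"
  using set_pl by auto

lemma finite_N: "finite N"
  using set_nl by auto

lemma sorted_wrt_sorted_items: "sorted_wrt logit_order sorted_items"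
  by (simp add: sorted_items_def sorted_wrt_msort)

lemma sorted_pos_eq: "sorted_pos = pos_items sorted_items"
  by (simp add: sorted_pos_def snd_split_pass itrev_Nil)

lemma mset_sorted_pos: "mset sorted_pos = mset pos_input"
  using mset_pos_items_cong[of sorted_items "tagP pos_input @ tagN neg_input"]
  by (simp add: sorted_pos_eq sorted_items_def pos_items_tag)

lemma mset_neg_items_sorted: "mset (neg_items sorted_items) = mset neg_input"
  using mset_neg_items_cong[of sorted_items "tagP pos_input @ tagN neg_input"]
  by (simp add: sorted_items_def neg_items_tag)

lemma length_pos_input: "length pos_input = card P"
  using distinct_card[OF distinct_pl] set_pl by (simp add: pos_input_def)

lemma length_neg_input: "length neg_input = card N"
  using distinct_card[OF distinct_nl] set_nl by (simp add: neg_input_def)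

lemma length_sorted_pos: "length sorted_pos = card P"
  by (metis mset_sorted_pos size_mset length_pos_input)

lemma set_sorted_pos: "set sorted_pos = (\<lambda>i. (i, s i, iou i)) ` P"
proof -
  have "set sorted_pos = set pos_input"
    by (metis mset_sorted_pos set_mset_mset)
  then show ?thesis
    by (simp add: pos_input_def set_pl)
qed

lemma sum_list_sorted_pos: "(\<Sum>x\<leftarrow>sorted_pos. F x) = (\<Sum>j\<in>P. F (j, s j, iou j))"
  using sum_list_map_mset_eq[OF mset_sorted_pos, of F] distinct_pl set_pl
  by (simp add: pos_input_def sum_list_distinct_conv_sum_set)

lemma npos_above_sorted_items: "npos_above sorted_items x = card {i \<in> P. x \<le> s i}"
proof -
  have "npos_above sorted_items x = length (filter (\<lambda>(i, s, u). x \<le> s) pos_input)"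
    unfolding npos_above_def sorted_pos_eq [symmetric] by (rule length_filter_mset_eq[OF mset_sorted_pos])
  also have "\<dots> = card {i \<in> P. x \<le> s i}"
    unfolding pos_input_def by (subst length_filter_map_distinct[OF distinct_pl]) (simp add: set_pl)
  finally show ?thesis .
qed

lemma bucket_Suc_eq: "bucket P N s (Suc k) = {n \<in> N. npos_above sorted_items (s n) = k}"
  by (auto simp: bucket_def bidx_def npos_above_sorted_items)

lemma length_bucket_items: "length (bucket_items sorted_items k) = card (bucket P N s (Suc k))"
proof -
  have "length (bucket_items sorted_items k)
      = length (filter (\<lambda>(x, sx). npos_above sorted_items sx = k) neg_input)"
    unfolding bucket_items_def by (rule length_filter_mset_eq[OF mset_neg_items_sorted])
  also have "\<dots> = card (bucket P N s (Suc k))"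
    unfolding neg_input_def bucket_Suc_eq
    by (subst length_filter_map_distinct[OF distinct_nl]) (simp add: set_nl)
  finally show ?thesis .
qed

lemma sum_bucket_items:
  "sum_list (map snd (bucket_items sorted_items k)) = (\<Sum>n\<in>bucket P N s (Suc k). s n)"
proof -
  let ?in_k = "\<lambda>(x, sx). npos_above sorted_items sx = k"
  have "sum_list (map snd (bucket_items sorted_items k))
      = (\<Sum>y\<leftarrow>neg_items sorted_items. if ?in_k y then snd y else 0)"
    unfolding bucket_items_def by (rule sum_list_map_filter')
  also have "\<dots> = (\<Sum>y\<leftarrow>neg_input. if ?in_k y then snd y else 0)"
    by (rule sum_list_map_mset_eq[OF mset_neg_items_sorted])
  also have "\<dots> = (\<Sum>n\<in>N. if npos_above sorted_items (s n) = k then s n else 0)"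
    using distinct_nl set_nl
    by (simp add: neg_input_def sum_list_distinct_conv_sum_set o_def cong: if_cong)
  also have "\<dots> = (\<Sum>n\<in>bucket P N s (Suc k). s n)"
    unfolding bucket_Suc_eq by (rule sum.inter_filter[OF finite_N, symmetric])
  finally show ?thesis .
qed

lemma prototypes_eq:
  "prototypes = map (\<lambda>k. (bsize P N s (Suc k), proto P N s (Suc k))) [0..<card P + 1]"
proof -
  have "prototypes = buckets 0 0 sorted_items"
    by (simp add: prototypes_def fst_split_pass sorted_wrt_sorted_items itrev_Nil)
  also have "\<dots> = map (\<lambda>k. bucket_stat 0 0 (bucket_items sorted_items k)) [0..<card P + 1]"
    unfolding buckets_def sorted_pos_eq [symmetric] length_sorted_pos
    by (simp only: Suc_eq_plus1 [symmetric] map_upt_Suc)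
  also have "\<dots> = map (\<lambda>k. (bsize P N s (Suc k), proto P N s (Suc k))) [0..<card P + 1]"
    by (intro map_cong refl)
      (simp add: bucket_stat_def length_bucket_items sum_bucket_items bsize_def proto_def)
  finally show ?thesis .
qed

lemma length_prototypes: "length prototypes = card P + 1"
  by (simp add: prototypes_eq)

lemma nth_prototypes:
  "k \<le> card P \<Longrightarrow> prototypes ! k = (bsize P N s (Suc k), proto P N s (Suc k))"
  by (simp add: prototypes_eq del: upt_Suc)

lemma nfp_prototypes: "nfp d (s i) prototypes = NFPb d P N s i"
proof -
  have "nfp d (s i) prototypes
      = (\<Sum>k\<leftarrow>[0..<card P + 1]. Hstep d (proto P N s (Suc k) - s i) * bsize P N s (Suc k))"
    by (simp add: nfp_eq prototypes_eq o_def del: upt_Suc)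
  also have "\<dots> = (\<Sum>k\<in>{0..<card P + 1}. Hstep d (proto P N s (Suc k) - s i) * bsize P N s (Suc k))"
    by (simp only: interv_sum_list_conv_sum_set_nat set_upt)
  also have "\<dots> = (\<Sum>k\<in>{Suc 0..<Suc (card P + 1)}. Hstep d (proto P N s k - s i) * bsize P N s k)"
    by (rule sum.shift_bounds_Suc_ivl [symmetric])
  also have "{Suc 0..<Suc (card P + 1)} = {1..card P + 1}"
    by auto
  finally show ?thesis
    unfolding NFPb_def .
qed

lemma lRf_eq_lRb: "lRf d (s i) prototypes sorted_pos = lRb d P N s i"
  by (simp add: lRf_def lRb_def nfp_prototypes rankp_eq sum_list_sorted_pos rankpos_def)

lemma lSf_eq_lS: "lSf d (s i) sorted_pos = lS d P s iou i"
  by (simp add: lSf_def lS_def sortnum_eq rankp_eq sum_list_sorted_pos rankpos_def)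

lemma lStf_eq_lSt: "lStf d (s i) (iou i) sorted_pos = lSt d P s iou i"
  by (simp add: lStf_def lSt_def tnum_eq tden_eq sum_list_sorted_pos)

lemma cross_mkQ:
  "cross d (s i) (iou i) (mkQ d sorted_pos sorted_pos)
     = (\<Sum>j\<in>P. (lS d P s iou j - lSt d P s iou j) * pS d P s iou i j)"
  by (simp add: cross_eq mkQ_eq o_def case_prod_unfold sum_list_sorted_pos lSf_eq_lS lStf_eq_lSt
      pden_eq pS_def)

lemma length_grad_acc: "length (grad_acc d) = card P + 1"
  by (simp add: grad_acc_def zeros_eq length_prototypes)

lemma nth_grad_acc:
  assumes "k \<le> card P"
  shows "grad_acc d ! k = (\<Sum>j\<in>P. lRb d P N s j / NFPb d P N s j
           * (bsize P N s (Suc k) * Hstep d (proto P N s (Suc k) - s j)))"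
proof -
  have "grad_acc d ! k = zeros prototypes ! k + (\<Sum>(i, si, ui)\<leftarrow>sorted_pos.
      lRf d si prototypes sorted_pos / nfp d si prototypes
      * (fst (prototypes ! k) * Hstep d (snd (prototypes ! k) - si)))"
    unfolding grad_acc_def using assms
    by (intro nth_accum) (simp_all add: zeros_eq length_prototypes)
  with assms show ?thesis
    by (simp add: zeros_eq length_prototypes sum_list_sorted_pos lRf_eq_lRb nfp_prototypes
        nth_prototypes del: replicate_Suc)
qed

lemma assign_grad_acc_eq:
  "assign (rlen sorted_pos) sorted_items prototypes (grad_acc d) =
     map (\<lambda>(x, sx). (x, grad_acc d ! npos_above sorted_items sx
                        / (fst (prototypes ! npos_above sorted_items sx) * rlen sorted_pos)))
       (neg_items sorted_items)"
  by (rule assign_eq_map)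
    (simp_all add: sorted_wrt_sorted_items length_prototypes length_grad_acc length_sorted_pos
      flip: sorted_pos_eq)

lemma assign_grad_acc:
  assumes "(x, g) \<in> set (assign (rlen sorted_pos) sorted_items prototypes (grad_acc d))"
  shows "x \<in> N \<and> g = gneg d P N s x"
proof -
  let ?k = "npos_above sorted_items"
  obtain sx where x: "(x, sx) \<in> set (neg_items sorted_items)"
    and g: "g = grad_acc d ! ?k sx / (fst (prototypes ! ?k sx) * rlen sorted_pos)"
    using assms by (auto simp: assign_grad_acc_eq)
  have "(x, sx) \<in> set neg_input"
    using x mset_neg_items_sorted by (metis set_mset_mset)
  then have "x \<in> N" and "sx = s x"
    by (auto simp: neg_input_def set_nl)
  define k where "k = card {i \<in> P. s x \<le> s i}"
  have "k \<le> card P"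
    unfolding k_def using finite_P by (intro card_mono) auto
  have "g = grad_acc d ! k / (bsize P N s (Suc k) * real (card P))"
    using \<open>k \<le> card P\<close>
    by (simp add: g \<open>sx = s x\<close> npos_above_sorted_items nth_prototypes rlen_eq length_sorted_pos
        flip: k_def)
  also have "\<dots> = gneg d P N s x"
    unfolding nth_grad_acc[OF \<open>k \<le> card P\<close>] gneg_def pkb_def bidx_def
    by (simp add: k_def sum_divide_distrib sum_distrib_left divide_inverse mult_ac)
  finally show ?thesis
    using \<open>x \<in> N\<close> by simp
qed

lemma output_keys:
  fixes d :: real and pos_out :: "('a \<times> real) list"
  assumes "map fst pos_out = map fst sorted_pos"
  defines "out \<equiv> pos_out @ assign (rlen sorted_pos) sorted_items prototypes (grad_acc d)"
  shows "distinct (map fst out) \<and> set (map fst out) = P \<union> N"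
proof -
  have "mset (map fst sorted_pos) = mset pl"
    by (simp add: mset_sorted_pos pos_input_def multiset.map_comp o_def)
  moreover have "mset (map fst (neg_items sorted_items)) = mset nl"
    by (simp add: mset_neg_items_sorted neg_input_def multiset.map_comp o_def)
  moreover have "map fst (assign (rlen sorted_pos) sorted_items prototypes (grad_acc d))
      = map fst (neg_items sorted_items)"
    by (simp add: assign_grad_acc_eq case_prod_unfold)
  ultimately have keys: "mset (map fst out) = mset (pl @ nl)"
    using assms by simp
  have "distinct (pl @ nl)"
    using distinct_pl distinct_nl disjoint set_pl set_nl by auto
  then have "distinct (map fst out)"
    using mset_eq_imp_distinct_iff[OF keys] by simp
  moreover have "set (map fst out) = set (pl @ nl)"
    using keys by (metis set_mset_mset)
  ultimately show ?thesis
    using set_pl set_nl by simp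
qed

lemma bucketed_AP_keys:
  "distinct (map fst (bucketed_AP d pos_input neg_input))
   \<and> set (map fst (bucketed_AP d pos_input neg_input)) = P \<union> N"
  unfolding bucketed_AP_unfold by (rule output_keys) (simp add: posAP_eq case_prod_unfold)

lemma bucketed_RS_keys:
  "distinct (map fst (bucketed_RS d pos_input neg_input))
   \<and> set (map fst (bucketed_RS d pos_input neg_input)) = P \<union> N"
  unfolding bucketed_RS_unfold by (rule output_keys) (simp add: posRS_eq case_prod_unfold)

lemma bucketed_AP_values: "\<forall>(x, g) \<in> set (bucketed_AP d pos_input neg_input). g = gAP d P N s x"
proof clarify
  fix x g
  assume "(x, g) \<in> set (bucketed_AP d pos_input neg_input)"
  then consider
      i where "i \<in> P" "x = i" "g = (0 - lRf d (s i) prototypes sorted_pos) / rlen sorted_pos"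
    | "(x, g) \<in> set (assign (rlen sorted_pos) sorted_items prototypes (grad_acc d))"
    by (auto simp: bucketed_AP_unfold posAP_eq set_sorted_pos)
  then show "g = gAP d P N s x"
  proof cases
    case 1
    then show ?thesis
      by (simp add: gAP_def lRf_eq_lRb rlen_eq length_sorted_pos)
  next
    case 2
    then show ?thesis
      using assign_grad_acc disjoint by (auto simp: gAP_def)
  qed
qed

lemma bucketed_RS_values:
  "\<forall>(x, g) \<in> set (bucketed_RS d pos_input neg_input). g = gRS d P N s iou x"
proof clarify
  fix x g
  assume "(x, g) \<in> set (bucketed_RS d pos_input neg_input)"
  then consider
      i where "i \<in> P" "x = i"
        "g = (0 - lRf d (s i) prototypes sorted_pos + lStf d (s i) (iou i) sorted_pos
              - lSf d (s i) sorted_pos + cross d (s i) (iou i) (mkQ d sorted_pos sorted_pos))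
             / rlen sorted_pos"
    | "(x, g) \<in> set (assign (rlen sorted_pos) sorted_items prototypes (grad_acc d))"
    by (auto simp: bucketed_RS_unfold posRS_eq set_sorted_pos)
  then show "g = gRS d P N s iou x"
  proof cases
    case 1
    then show ?thesis
      by (simp add: gRS_def lRf_eq_lRb lStf_eq_lSt lSf_eq_lS cross_mkQ rlen_eq length_sorted_pos)
  next
    case 2
    then show ?thesis
      using assign_grad_acc disjoint by (auto simp: gRS_def)
  qed
qed

lemma T_bucketed_common_le:
  fixes d :: real
  defines "r \<equiv> split_pass sorted_items 0 0 [] []" and "np \<equiv> rlen sorted_pos"
  shows "T_tagP pos_input + T_tagN neg_input + T_append (tagP pos_input) (tagN neg_input)
      + T_split_pass sorted_items 0 0 [] [] + T_fst r + T_itrev (fst r) [] + T_snd r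
      + T_itrev (snd r) [] + T_rlen sorted_pos + T_zeros prototypes
      + T_accum d prototypes sorted_pos sorted_pos (zeros prototypes)
      + T_assign np sorted_items prototypes (grad_acc d)
      \<le> 3 * (card P + card N) + 10 * card P ^ 2 + 21 * card P + 12"
proof -
  obtain fr sr where r: "r = (fr, sr)"
    by (cases r)
  have "length (fst r) = card P + 1" and "length (snd r) = card P"
    using length_prototypes length_sorted_pos
    by (simp_all add: prototypes_def sorted_pos_def itrev_Nil r_def)
  moreover have "length sorted_items = card P + card N"
    by (simp add: sorted_items_def tagP_eq tagN_eq length_pos_input length_neg_input)
  moreover have "T_accum d prototypes sorted_pos sorted_pos (zeros prototypes)
      \<le> 10 * card P ^ 2 + 15 * card P + 1"
    using T_accum_le[of d prototypes sorted_pos sorted_pos] length_prototypes length_sorted_pos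
    by (simp add: power2_eq_square algebra_simps)
  moreover have "T_assign np sorted_items prototypes (grad_acc d) \<le> length sorted_items + 1"
    by (rule T_assign_le)
  ultimately show ?thesis
    using length_pos_input length_neg_input length_prototypes length_sorted_pos
    by (simp add: T_tagP_eq T_tagN_eq T_append tagP_eq T_split_pass_eq r T_itrev T_rlen_eq
        T_zeros_eq)
qed

lemma T_bucketed_le_T_msort:
  defines "n \<equiv> card P + card N" and "m \<equiv> card P"
  shows "T_bucketed_AP d pos_input neg_input
           \<le> T_msort (tagP pos_input @ tagN neg_input) + 3 * n + 42 * m ^ 2 + 50 * m + 20"
    and "T_bucketed_RS d pos_input neg_input
           \<le> T_msort (tagP pos_input @ tagN neg_input) + 3 * n + 42 * m ^ 2 + 50 * m + 20"
proof -
  let ?np = "rlen sorted_pos" and ?Q = "mkQ d sorted_pos sorted_pos"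
  let ?neg_out = "assign ?np sorted_items prototypes (grad_acc d)"
  note common = T_bucketed_common_le[of d, folded n_def m_def]
  have "T_posAP d ?np prototypes sorted_pos sorted_pos \<le> 6 * m ^ 2 + 9 * m + 1"
    using T_posAP_le[of d ?np prototypes sorted_pos sorted_pos] length_prototypes length_sorted_pos
    by (simp add: m_def power2_eq_square algebra_simps)
  moreover have "T_append (posAP d ?np prototypes sorted_pos sorted_pos) ?neg_out = m + 1"
    by (simp add: T_append posAP_eq length_sorted_pos m_def)
  ultimately show "T_bucketed_AP d pos_input neg_input
      \<le> T_msort (tagP pos_input @ tagN neg_input) + 3 * n + 42 * m ^ 2 + 50 * m + 20"
    using common
    unfolding T_bucketed_AP_def Let_def sorted_items_def [symmetric] prototypes_def [symmetric]
      sorted_pos_def [symmetric] grad_acc_def [symmetric]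
    by linarith
  have "T_mkQ d sorted_pos sorted_pos \<le> 13 * m ^ 2 + 8 * m + 1"
    using T_mkQ_le[of d sorted_pos sorted_pos] length_sorted_pos
    by (simp add: m_def power2_eq_square algebra_simps)
  moreover have "T_posRS d ?np prototypes sorted_pos ?Q sorted_pos \<le> 19 * m ^ 2 + 16 * m + 1"
    using T_posRS_le[of d ?np prototypes sorted_pos ?Q sorted_pos] length_prototypes
      length_sorted_pos
    by (simp add: m_def mkQ_eq power2_eq_square algebra_simps)
  moreover have "T_append (posRS d ?np prototypes sorted_pos ?Q sorted_pos) ?neg_out = m + 1"
    by (simp add: T_append posRS_eq length_sorted_pos m_def)
  ultimately show "T_bucketed_RS d pos_input neg_input
      \<le> T_msort (tagP pos_input @ tagN neg_input) + 3 * n + 42 * m ^ 2 + 50 * m + 20"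
    using common
    unfolding T_bucketed_RS_def Let_def sorted_items_def [symmetric] prototypes_def [symmetric]
      sorted_pos_def [symmetric] grad_acc_def [symmetric]
    by linarith
qed

lemma T_bucketed_le_max_nlogn_sq:
  assumes "1 \<le> card P"
  defines "bound \<equiv> 132 * max (real (card P + card N) * log 2 (real (card P + card N)))
                             (real (card P) ^ 2)"
  shows "real (T_bucketed_AP d pos_input neg_input) \<le> bound"
    and "real (T_bucketed_RS d pos_input neg_input) \<le> bound"
proof -
  let ?A = "tagP pos_input @ tagN neg_input"
  have "length ?A = card P + card N"
    by (simp add: tagP_eq tagN_eq length_pos_input length_neg_input)
  moreover have "?A \<noteq> []"
    using assms(1) \<open>length ?A = card P + card N\<close> by auto
  ultimately have msort: "real (T_msort ?A)
      \<le> 7 * real (card P + card N) * log 2 (real (card P + card N)) + 10 * real (card P + card N)"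
    using T_msort_le_log[of ?A] by simp
  show "real (T_bucketed_AP d pos_input neg_input) \<le> bound"
    unfolding bound_def
    by (rule cost_le_max_nlogn_sq[OF assms(1) le_add1 T_bucketed_le_T_msort(1) msort])
  show "real (T_bucketed_RS d pos_input neg_input) \<le> bound"
    unfolding bound_def
    by (rule cost_le_max_nlogn_sq[OF assms(1) le_add1 T_bucketed_le_T_msort(2) msort])
qed

end

theorem theorem2:
  shows "\<exists>C :: real. \<forall>(P :: 'a set) (N :: 'a set) (s :: 'a \<Rightarrow> real) (iou :: 'a \<Rightarrow> real)
           (d :: real) (pl :: 'a list) (nl :: 'a list).
     finite P \<and> finite N \<and> P \<inter> N = {} \<and> card P \<ge> 1 \<and>
     (\<forall>i\<in>P. 0 \<le> iou i \<and> iou i \<le> 1) \<and> d \<ge> 0 \<and>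
     distinct pl \<and> set pl = P \<and> distinct nl \<and> set nl = N \<longrightarrow>
     (let ps = map (\<lambda>i. (i, s i, iou i)) pl;
          ns = map (\<lambda>i. (i, s i)) nl;
          n = real (card P + card N);
          bound = C * max (n * log 2 n) (real (card P) ^ 2);
          outAP = bucketed_AP d ps ns;
          outRS = bucketed_RS d ps ns
      in distinct (map fst outAP) \<and> set (map fst outAP) = P \<union> N \<and>
         (\<forall>(x, g) \<in> set outAP. g = gAP d P N s x) \<and>
         distinct (map fst outRS) \<and> set (map fst outRS) = P \<union> N \<and>
         (\<forall>(x, g) \<in> set outRS. g = gRS d P N s iou x) \<and>
         real (T_bucketed_AP d ps ns) \<le> bound \<and>
         real (T_bucketed_RS d ps ns) \<le> bound)"
  apply (rule exI [of _ 132], intro allI impI, elim conjE)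
  subgoal premises hyps for P N s iou d pl nl
  proof -
    interpret bucketed_input P N s iou pl nl
      using hyps by unfold_locales
    show ?thesis
      unfolding Let_def pos_input_def [symmetric] neg_input_def [symmetric]
      using bucketed_AP_keys bucketed_AP_values bucketed_RS_keys bucketed_RS_values
        T_bucketed_le_max_nlogn_sq[OF hyps(4)]
      by simp
  qed
  done

end
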